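(* Let $A$ be a centrally essential ring such that the factor ring $A/J(A)$ is commutative, where $J(A)$ is the Jacobson radical. Then every minimal right ideal $S$ of $A$ is contained in the center $Z(A)$. In particular, every minimal right ideal of $A$ is a two-sided ideal, and the right socle $\mathrm{Soc}\,A_A$ is contained in $Z(A)$.
   Context: All rings are associative, unital and non-zero. $Z(A)$ denotes the center of a ring $A$. A ring $A$ is centrally essential if either $A$ is commutative or for every non-central element $a\in A$ there exist non-zero central elements $x,y\in Z(A)$ with $ax=y$. *)

theory Defs
  imports Main
begin

definition center :: "'a::ring_1 set" where
  "center = {z. \<forall>a. z * a = a * z}"

definition centrally_essential :: "'a::ring_1 itself \<Rightarrow> bool" where
  "centrally_essential _ \<longleftrightarrow>
     (\<forall>a b :: 'a. a * b = b * a) \<or>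
     (\<forall>a :: 'a. a \<notin> center \<longrightarrow>
        (\<exists>x\<in>center. \<exists>y\<in>center. x \<noteq> 0 \<and> y \<noteq> 0 \<and> a * x = y))"

definition right_ideal :: "'a::ring_1 set \<Rightarrow> bool" where
  "right_ideal I \<longleftrightarrow> 0 \<in> I \<and> (\<forall>x\<in>I. \<forall>y\<in>I. x + y \<in> I) \<and> (\<forall>x\<in>I. - x \<in> I)
     \<and> (\<forall>x\<in>I. \<forall>a. x * a \<in> I)"

definition two_sided_ideal :: "'a::ring_1 set \<Rightarrow> bool" where
  "two_sided_ideal I \<longleftrightarrow> right_ideal I \<and> (\<forall>x\<in>I. \<forall>a. a * x \<in> I)"

definition maximal_right_ideal :: "'a::ring_1 set \<Rightarrow> bool" where
  "maximal_right_ideal I \<longleftrightarrow> right_ideal I \<and> I \<noteq> UNIV \<and>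
     (\<forall>K. right_ideal K \<and> I \<subseteq> K \<longrightarrow> K = I \<or> K = UNIV)"

definition minimal_right_ideal :: "'a::ring_1 set \<Rightarrow> bool" where
  "minimal_right_ideal S \<longleftrightarrow> right_ideal S \<and> S \<noteq> {0} \<and>
     (\<forall>K. right_ideal K \<and> K \<subseteq> S \<longrightarrow> K = {0} \<or> K = S)"

definition jacobson :: "'a::ring_1 set" where
  "jacobson = \<Inter>{I. maximal_right_ideal I}"

text \<open>A/J(A) is commutative: all commutators lie in J(A).\<close>
definition comm_mod_jacobson :: "'a::ring_1 itself \<Rightarrow> bool" where
  "comm_mod_jacobson _ \<longleftrightarrow> (\<forall>x y :: 'a. x * y - y * x \<in> jacobson)"

text \<open>Right socle: sum of all minimal right ideals (additive subgroup generated by their union).\<close>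
inductive_set right_socle :: "'a::ring_1 set" where
  zero: "0 \<in> right_socle"
| gen: "minimal_right_ideal S \<Longrightarrow> x \<in> S \<Longrightarrow> x \<in> right_socle"
| add: "x \<in> right_socle \<Longrightarrow> y \<in> right_socle \<Longrightarrow> x + y \<in> right_socle"
| neg: "x \<in> right_socle \<Longrightarrow> - x \<in> right_socle"

end

theory Submission
  imports Defs
begin

text \<open>A minimal right ideal \<open>S\<close> is annihilated on the right by \<open>J(A)\<close>: for \<open>0 \<noteq> s \<in> S\<close> the map
  \<open>a \<mapsto> s a\<close> is onto \<open>S\<close>, so its kernel is a maximal right ideal and contains \<open>J(A)\<close>.
  If some \<open>s \<in> S\<close> were not central, central essentiality gives a central \<open>y = s x \<noteq> 0\<close> in \<open>S\<close>;
  then \<open>S = y A\<close>, and since commutators lie in \<open>J(A)\<close>, every \<open>y a\<close> commutes with every \<open>b\<close>: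
  \<open>y a b = y b a = b y a\<close>.\<close>

lemma right_ideal_UNIV: "right_ideal (UNIV :: 'a::ring_1 set)"
  unfolding right_ideal_def by blast

lemma right_ideal_lmult_image:
  fixes s :: "'a::ring_1"
  assumes "right_ideal K"
  shows "right_ideal ((*) s ` K)"
  unfolding right_ideal_def
proof (intro conjI ballI allI)
  show "0 \<in> (*) s ` K"
    using assms unfolding right_ideal_def by (metis image_eqI mult_zero_right)
next
  fix x y assume "x \<in> (*) s ` K" "y \<in> (*) s ` K"
  then obtain k l where "x = s * k" "y = s * l" "k \<in> K" "l \<in> K" by blast
  moreover have "k + l \<in> K"
    using assms \<open>k \<in> K\<close> \<open>l \<in> K\<close> unfolding right_ideal_def by blast
  ultimately show "x + y \<in> (*) s ` K" by (metis distrib_left image_eqI)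
next
  fix x assume "x \<in> (*) s ` K"
  then obtain k where k: "x = s * k" "k \<in> K" by blast
  have "- k \<in> K" and "\<And>a. k * a \<in> K"
    using assms k(2) unfolding right_ideal_def by blast+
  with k show "- x \<in> (*) s ` K" and "\<And>a. x * a \<in> (*) s ` K"
    by (metis image_eqI mult_minus_right mult.assoc)+
qed

lemma right_ideal_lmult_image_subset:
  assumes "right_ideal S" "s \<in> S"
  shows "(*) s ` K \<subseteq> S"
  using assms unfolding right_ideal_def by blast

lemma right_ideal_one_imp_UNIV:
  assumes "right_ideal K" "(1::'a::ring_1) \<in> K"
  shows "K = UNIV"
  using assms unfolding right_ideal_def by (metis UNIV_eq_I mult_1)

lemma right_ideal_annihilator: "right_ideal {a. s * a = (0::'a::ring_1)}"
  unfolding right_ideal_def by (simp add: distrib_left mult.assoc[symmetric])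

lemma minimal_right_ideal_eq_lmult_image:
  assumes S: "minimal_right_ideal S" and K: "right_ideal K"
    and s: "s \<in> S" "(*) s ` K \<noteq> {0}"
  shows "(*) s ` K = S"
  using S s right_ideal_lmult_image[OF K, of s]
    right_ideal_lmult_image_subset[of S s K]
  unfolding minimal_right_ideal_def by blast

lemma maximal_right_ideal_annihilator:
  fixes s :: "'a::ring_1"
  assumes S: "minimal_right_ideal S" and s: "s \<in> S" "s \<noteq> 0"
  shows "maximal_right_ideal {a. s * a = 0}"
proof -
  have "K = {a. s * a = 0} \<or> K = UNIV"
    if K: "right_ideal K" "{a. s * a = 0} \<subseteq> K" for K
  proof (cases "(*) s ` K = {0}")
    case True
    then show ?thesis using K by blast
  next
    case False
    then have "(*) s ` K = S"
      using minimal_right_ideal_eq_lmult_image[OF S K(1) s(1)] by blast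
    then obtain k where k: "k \<in> K" "s = s * k" using s by blast
    then have "s * (1 - k) = 0" by (simp add: right_diff_distrib)
    then have "1 - k \<in> K" using K(2) by blast
    then have "(1 - k) + k \<in> K" using k K(1) unfolding right_ideal_def by blast
    then show ?thesis using right_ideal_one_imp_UNIV[OF K(1)] by simp
  qed
  moreover have "{a. s * a = 0} \<noteq> UNIV"
    using s(2) by (metis (mono_tags) UNIV_I mem_Collect_eq mult_1_right)
  ultimately show ?thesis
    unfolding maximal_right_ideal_def by (simp add: right_ideal_annihilator)
qed

lemma minimal_right_ideal_mult_jacobson:
  fixes s :: "'a::ring_1"
  assumes "minimal_right_ideal S" "s \<in> S" "j \<in> jacobson"
  shows "s * j = 0"
proof (cases "s = 0")
  case False
  then have "maximal_right_ideal {a. s * a = 0}"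
    using maximal_right_ideal_annihilator assms(1,2) by blast
  then show ?thesis using assms(3) unfolding jacobson_def by blast
qed simp

lemma minimal_right_ideal_subset_center:
  fixes S :: "'a::ring_1 set"
  assumes ce: "centrally_essential TYPE('a)" and cj: "comm_mod_jacobson TYPE('a)"
    and S: "minimal_right_ideal S"
  shows "S \<subseteq> center"
proof
  fix s assume s: "s \<in> S"
  show "s \<in> center"
  proof (rule ccontr)
    assume nc: "s \<notin> center"
    then obtain x y where xy: "y \<in> center" "y \<noteq> 0" "s * x = y"
      using ce unfolding centrally_essential_def center_def by blast
    have RS: "right_ideal S" using S unfolding minimal_right_ideal_def by blast
    then have y: "y \<in> S" using s xy(3) unfolding right_ideal_def by blast
    have "(*) y ` UNIV = S"
      by (rule minimal_right_ideal_eq_lmult_image[OF S right_ideal_UNIV y])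
        (metis xy(2) rangeI mult_1_right singletonD)
    then obtain a where a: "s = y * a" using s by blast
    have "s * b = b * s" for b
    proof -
      have "y * (a * b - b * a) = 0"
        using minimal_right_ideal_mult_jacobson[OF S y] cj
        unfolding comm_mod_jacobson_def by blast
      then have "y * a * b = y * b * a" by (simp add: right_diff_distrib mult.assoc)
      moreover have "y * b = b * y" using xy(1) unfolding center_def by blast
      ultimately show ?thesis using a by (simp add: mult.assoc)
    qed
    then show False using nc unfolding center_def by blast
  qed
qed

lemma two_sided_ideal_if_subset_center:
  assumes S: "right_ideal S" "S \<subseteq> center"
  shows "two_sided_ideal S"
  unfolding two_sided_ideal_def
proof (intro conjI ballI allI)
  fix x a assume x: "x \<in> S"
  then have "x * a \<in> S" using S(1) unfolding right_ideal_def by blast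
  moreover have "x * a = a * x" using x S(2) unfolding center_def by blast
  ultimately show "a * x \<in> S" by simp
qed (rule S(1))

lemma center_closed:
  "(0::'a::ring_1) \<in> center"
  "x \<in> center \<Longrightarrow> y \<in> center \<Longrightarrow> x + y \<in> center"
  "x \<in> center \<Longrightarrow> - x \<in> center"
  unfolding center_def by (simp_all add: distrib_left distrib_right)

lemma right_socle_subset_center:
  assumes "\<And>S. minimal_right_ideal S \<Longrightarrow> S \<subseteq> (center :: 'a::ring_1 set)"
  shows "(right_socle :: 'a set) \<subseteq> center"
proof
  fix x :: 'a assume "x \<in> right_socle"
  then show "x \<in> center"
    by induction (use assms center_closed in blast)+
qed

theorem mainTheorem3:
  assumes "centrally_essential TYPE('a::ring_1)"
    and "comm_mod_jacobson TYPE('a)"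
  shows "(\<forall>S :: 'a set. minimal_right_ideal S \<longrightarrow> S \<subseteq> center \<and> two_sided_ideal S)
         \<and> (right_socle :: 'a set) \<subseteq> center"
proof -
  have central: "S \<subseteq> center" if "minimal_right_ideal S" for S :: "'a set"
    using minimal_right_ideal_subset_center[OF assms that] .
  moreover have "two_sided_ideal S" if "minimal_right_ideal S" for S :: "'a set"
    using that central[OF that] two_sided_ideal_if_subset_center
    unfolding minimal_right_ideal_def by blast
  ultimately show ?thesis using right_socle_subset_center[OF central] by blast
qed

end
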